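(* Let $Q$ be a commutative automorphic loop of nilpotency class $3$. Then $((a,b,c),d,e)^{-1}=(e,d,(a,b,c))$ and $(a,(b,c,d),e)=(a,e,(b,c,d))((b,c,d),a,e)$ for every $a,b,c,d,e\in Q$.
   Context: A loop is a set with a binary operation such that all left and right translations $L_a:b\mapsto ab$, $R_a:b\mapsto ba$ are bijections and there is a two-sided identity $1$. The inner mapping group is the stabilizer of $1$ in the group generated by all translations; $Q$ is automorphic if all inner mappings are automorphisms. The associator $(a,b,c)$ is defined by $(ab)c=(a(bc))(a,b,c)$. The center $Z(Q)$ is the set of elements fixed by all inner mappings; $Z_0=1$, $Z_{i+1}(Q)$ is the preimage of $Z(Q/Z_i(Q))$, and $Q$ has nilpotency class $n$ if $Z_{n-1}(Q)\neq Q=Z_n(Q)$. Inverses $z^{-1}$ are two-sided inverses (automorphic loops are power-associative). *)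

theory Defs
  imports "HOL-Algebra.Bij" "HOL-Algebra.Generated_Groups"
begin

definition is_loop :: "'a set \<Rightarrow> ('a \<Rightarrow> 'a \<Rightarrow> 'a) \<Rightarrow> 'a \<Rightarrow> bool" where
  "is_loop Q m u \<longleftrightarrow>
     u \<in> Q \<and> (\<forall>a\<in>Q. \<forall>b\<in>Q. m a b \<in> Q) \<and>
     (\<forall>a\<in>Q. m u a = a \<and> m a u = a) \<and>
     (\<forall>a\<in>Q. bij_betw (\<lambda>b. m a b) Q Q \<and> bij_betw (\<lambda>b. m b a) Q Q)"

definition lmap :: "'a set \<Rightarrow> ('a \<Rightarrow> 'a \<Rightarrow> 'a) \<Rightarrow> 'a \<Rightarrow> 'a \<Rightarrow> 'a" where
  "lmap Q m a = (\<lambda>b\<in>Q. m a b)"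

definition rmap :: "'a set \<Rightarrow> ('a \<Rightarrow> 'a \<Rightarrow> 'a) \<Rightarrow> 'a \<Rightarrow> 'a \<Rightarrow> 'a" where
  "rmap Q m a = (\<lambda>b\<in>Q. m b a)"

definition mlt_group :: "'a set \<Rightarrow> ('a \<Rightarrow> 'a \<Rightarrow> 'a) \<Rightarrow> ('a \<Rightarrow> 'a) set" where
  "mlt_group Q m = generate (BijGroup Q) ((lmap Q m ` Q) \<union> (rmap Q m ` Q))"

definition inn_group :: "'a set \<Rightarrow> ('a \<Rightarrow> 'a \<Rightarrow> 'a) \<Rightarrow> 'a \<Rightarrow> ('a \<Rightarrow> 'a) set" where
  "inn_group Q m u = {f \<in> mlt_group Q m. f u = u}"

definition loop_commutative :: "'a set \<Rightarrow> ('a \<Rightarrow> 'a \<Rightarrow> 'a) \<Rightarrow> bool" where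
  "loop_commutative Q m \<longleftrightarrow> (\<forall>a\<in>Q. \<forall>b\<in>Q. m a b = m b a)"

text \<open>Automorphic: every inner mapping is an automorphism (inner mappings are already
  bijections of Q, so it remains to require that they are multiplicative).\<close>
definition loop_automorphic :: "'a set \<Rightarrow> ('a \<Rightarrow> 'a \<Rightarrow> 'a) \<Rightarrow> 'a \<Rightarrow> bool" where
  "loop_automorphic Q m u \<longleftrightarrow>
     (\<forall>f\<in>inn_group Q m u. \<forall>a\<in>Q. \<forall>b\<in>Q. f (m a b) = m (f a) (f b))"

definition loop_center :: "'a set \<Rightarrow> ('a \<Rightarrow> 'a \<Rightarrow> 'a) \<Rightarrow> 'a \<Rightarrow> 'a set" where
  "loop_center Q m u = {z \<in> Q. \<forall>f\<in>inn_group Q m u. f z = z}"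

text \<open>Quotient loop Q/N (for a normal subloop N): cosets aN, with the product of cosets
  as complex product.\<close>
definition lcoset :: "('a \<Rightarrow> 'a \<Rightarrow> 'a) \<Rightarrow> 'a \<Rightarrow> 'a set \<Rightarrow> 'a set" where
  "lcoset m a N = (\<lambda>n. m a n) ` N"

definition quot_carrier :: "'a set \<Rightarrow> ('a \<Rightarrow> 'a \<Rightarrow> 'a) \<Rightarrow> 'a set \<Rightarrow> 'a set set" where
  "quot_carrier Q m N = (\<lambda>a. lcoset m a N) ` Q"

definition quot_mult :: "('a \<Rightarrow> 'a \<Rightarrow> 'a) \<Rightarrow> 'a set \<Rightarrow> 'a set \<Rightarrow> 'a set" where
  "quot_mult m A B = {m a b | a b. a \<in> A \<and> b \<in> B}"

fun upper_center :: "'a set \<Rightarrow> ('a \<Rightarrow> 'a \<Rightarrow> 'a) \<Rightarrow> 'a \<Rightarrow> nat \<Rightarrow> 'a set" where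
  "upper_center Q m u 0 = {u}"
| "upper_center Q m u (Suc i) =
     (let N = upper_center Q m u i in
      {x \<in> Q. lcoset m x N \<in> loop_center (quot_carrier Q m N) (quot_mult m) N})"

definition nilpotency_class :: "'a set \<Rightarrow> ('a \<Rightarrow> 'a \<Rightarrow> 'a) \<Rightarrow> 'a \<Rightarrow> nat \<Rightarrow> bool" where
  "nilpotency_class Q m u n \<longleftrightarrow>
     n \<ge> 1 \<and> upper_center Q m u (n - 1) \<noteq> Q \<and> upper_center Q m u n = Q"

definition associator :: "'a set \<Rightarrow> ('a \<Rightarrow> 'a \<Rightarrow> 'a) \<Rightarrow> 'a \<Rightarrow> 'a \<Rightarrow> 'a \<Rightarrow> 'a" where
  "associator Q m a b c = (THE z. z \<in> Q \<and> m (m a b) c = m (m a (m b c)) z)"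

definition loop_inverse :: "'a set \<Rightarrow> ('a \<Rightarrow> 'a \<Rightarrow> 'a) \<Rightarrow> 'a \<Rightarrow> 'a \<Rightarrow> 'a" where
  "loop_inverse Q m u z = (THE w. w \<in> Q \<and> m z w = u \<and> m w z = u)"

end

theory Submission
  imports Defs
begin

text \<open>Every term Z_i of the upper central series is a normal subloop, being the preimage of
  the center of Q/Z_(i-1), and in a commutative loop the center is exactly the left nucleus.
  An element whose coset is central in Q/N has all its associators in N. So for class 3,
  every associator (a,b,c) lies in Z_2, and every associator with an entry from Z_2 is
  nuclear. With w = (a,b,c), commutativity rewrites (w d)e = (w(de))(w,d,e) into
  w(de) = ((w d)e)(e,d,w), and since (e,d,w) is nuclear the two associators cancel;
  comparing (a w)e and (w a)e in the same way gives the second identity.\<close>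

locale loop_on =
  fixes Q :: "'a set" and m :: "'a \<Rightarrow> 'a \<Rightarrow> 'a" and u :: 'a
  assumes is_loop: "is_loop Q m u"
begin

lemma unit_closed: "u \<in> Q"
  using is_loop by (simp add: is_loop_def)

lemma mult_closed: "a \<in> Q \<Longrightarrow> b \<in> Q \<Longrightarrow> m a b \<in> Q"
  using is_loop by (simp add: is_loop_def)

lemma left_unit: "a \<in> Q \<Longrightarrow> m u a = a"
  using is_loop by (simp add: is_loop_def)

lemma right_unit: "a \<in> Q \<Longrightarrow> m a u = a"
  using is_loop by (simp add: is_loop_def)

lemma bij_left_translation: "a \<in> Q \<Longrightarrow> bij_betw (\<lambda>b. m a b) Q Q"
  using is_loop by (simp add: is_loop_def)

lemma bij_right_translation: "a \<in> Q \<Longrightarrow> bij_betw (\<lambda>b. m b a) Q Q"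
  using is_loop by (simp add: is_loop_def)

lemma left_cancel: "a \<in> Q \<Longrightarrow> b \<in> Q \<Longrightarrow> c \<in> Q \<Longrightarrow> m a b = m a c \<Longrightarrow> b = c"
  using bij_left_translation[of a] by (auto simp: bij_betw_def inj_on_def)

lemma left_division:
  assumes "a \<in> Q" "b \<in> Q" obtains t where "t \<in> Q" "m a t = b"
  using bij_left_translation[OF assms(1)] assms(2) unfolding bij_betw_def by (metis imageE)

lemma lmap_Bij: "a \<in> Q \<Longrightarrow> lmap Q m a \<in> Bij Q"
  using bij_left_translation[of a] unfolding Bij_def lmap_def
  by (simp add: bij_betw_cong[of Q "restrict (\<lambda>b. m a b) Q" "\<lambda>b. m a b"])

lemma rmap_Bij: "a \<in> Q \<Longrightarrow> rmap Q m a \<in> Bij Q"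
  using bij_right_translation[of a] unfolding Bij_def rmap_def
  by (simp add: bij_betw_cong[of Q "restrict (\<lambda>b. m b a) Q" "\<lambda>b. m b a"])

lemma associator_spec:
  assumes "a \<in> Q" "b \<in> Q" "c \<in> Q"
  shows "associator Q m a b c \<in> Q \<and> m (m a b) c = m (m a (m b c)) (associator Q m a b c)"
proof -
  have abc: "m a (m b c) \<in> Q" "m (m a b) c \<in> Q" using assms mult_closed by auto
  obtain t where t: "t \<in> Q" "m (m a (m b c)) t = m (m a b) c" using left_division[OF abc] .
  have "\<exists>!z. z \<in> Q \<and> m (m a b) c = m (m a (m b c)) z"
    using t left_cancel[OF abc(1)] by metis
  then show ?thesis unfolding associator_def by (rule theI')
qed

lemma associator_eqI:
  assumes "a \<in> Q" "b \<in> Q" "c \<in> Q" "z \<in> Q" "m (m a b) c = m (m a (m b c)) z"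
  shows "associator Q m a b c = z"
  using associator_spec[OF assms(1-3)] assms left_cancel mult_closed by metis

lemma loop_inverse_eqI:
  assumes "z \<in> Q" "w \<in> Q" "m z w = u" "m w z = u"
  shows "loop_inverse Q m u z = w"
  unfolding loop_inverse_def
  by (rule the_equality) (use assms left_cancel in auto)

end


text \<open>The properties of the cosets of a normal subloop N that make Q/N a loop with
  x \<mapsto> xN a homomorphism.\<close>

definition coset_compatible :: "'a set \<Rightarrow> ('a \<Rightarrow> 'a \<Rightarrow> 'a) \<Rightarrow> 'a \<Rightarrow> 'a set \<Rightarrow> bool" where
  "coset_compatible Q m u N \<longleftrightarrow> N \<subseteq> Q \<and> u \<in> N \<and>
     (\<forall>x\<in>Q. \<forall>y\<in>Q. lcoset m x N = lcoset m y N \<longleftrightarrow> (\<exists>n\<in>N. y = m x n)) \<and>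
     (\<forall>x\<in>Q. \<forall>y\<in>Q. quot_mult m (lcoset m x N) (lcoset m y N) = lcoset m (m x y) N) \<and>
     (\<forall>x\<in>Q. \<forall>y\<in>Q. \<forall>y'\<in>Q.
        lcoset m (m x y) N = lcoset m (m x y') N \<longrightarrow> lcoset m y N = lcoset m y' N)"

context
  fixes Q :: "'a set" and m u N
  assumes N: "coset_compatible Q m u N"
begin

lemma coset_compatible_subset: "N \<subseteq> Q"
  using N by (simp add: coset_compatible_def)

lemma coset_compatible_unit: "u \<in> N"
  using N by (simp add: coset_compatible_def)

lemma lcoset_eq_iff:
  "x \<in> Q \<Longrightarrow> y \<in> Q \<Longrightarrow> lcoset m x N = lcoset m y N \<longleftrightarrow> (\<exists>n\<in>N. y = m x n)"
  using N unfolding coset_compatible_def by blast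

lemma quot_mult_lcoset:
  "x \<in> Q \<Longrightarrow> y \<in> Q \<Longrightarrow> quot_mult m (lcoset m x N) (lcoset m y N) = lcoset m (m x y) N"
  using N unfolding coset_compatible_def by blast

lemma lcoset_left_cancel:
  "x \<in> Q \<Longrightarrow> y \<in> Q \<Longrightarrow> y' \<in> Q \<Longrightarrow>
     lcoset m (m x y) N = lcoset m (m x y') N \<Longrightarrow> lcoset m y N = lcoset m y' N"
  using N unfolding coset_compatible_def by blast

end

lemma coset_compatibleI:
  assumes "N \<subseteq> Q" "u \<in> N"
    and "\<And>x y. x \<in> Q \<Longrightarrow> y \<in> Q \<Longrightarrow> lcoset m x N = lcoset m y N \<longleftrightarrow> (\<exists>n\<in>N. y = m x n)"
    and "\<And>x y. x \<in> Q \<Longrightarrow> y \<in> Q \<Longrightarrow>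
           quot_mult m (lcoset m x N) (lcoset m y N) = lcoset m (m x y) N"
    and "\<And>x y y'. x \<in> Q \<Longrightarrow> y \<in> Q \<Longrightarrow> y' \<in> Q \<Longrightarrow>
           lcoset m (m x y) N = lcoset m (m x y') N \<Longrightarrow> lcoset m y N = lcoset m y' N"
  shows "coset_compatible Q m u N"
  unfolding coset_compatible_def
  by (intro conjI ballI impI) (assumption | rule assms)+

lemma lcoset_memI: "n \<in> N \<Longrightarrow> m x n \<in> lcoset m x N"
  by (simp add: lcoset_def)

lemma lcoset_memE: "v \<in> lcoset m x N \<Longrightarrow> (\<And>n. n \<in> N \<Longrightarrow> v = m x n \<Longrightarrow> thesis) \<Longrightarrow> thesis"
  unfolding lcoset_def by blast

lemma quot_mult_memE:
  "v \<in> quot_mult m A B \<Longrightarrow> (\<And>a b. a \<in> A \<Longrightarrow> b \<in> B \<Longrightarrow> v = m a b \<Longrightarrow> thesis) \<Longrightarrow> thesis"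
  unfolding quot_mult_def by blast

lemma quot_mult_memI: "a \<in> A \<Longrightarrow> b \<in> B \<Longrightarrow> m a b \<in> quot_mult m A B"
  by (auto simp: quot_mult_def)

context loop_on
begin

lemma lcoset_subset: "x \<in> Q \<Longrightarrow> N \<subseteq> Q \<Longrightarrow> lcoset m x N \<subseteq> Q"
  by (auto simp: lcoset_def mult_closed)

lemma mem_own_lcoset: "x \<in> Q \<Longrightarrow> u \<in> N \<Longrightarrow> x \<in> lcoset m x N"
  using lcoset_memI[of u N m x] right_unit by simp

lemma associator_in_kernel:
  assumes N: "coset_compatible Q m u N" and abc: "a \<in> Q" "b \<in> Q" "c \<in> Q"
    and eq: "lcoset m (m a (m b c)) N = lcoset m (m (m a b) c) N"
  shows "associator Q m a b c \<in> N"
proof -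
  obtain n where "n \<in> N" "m (m a b) c = m (m a (m b c)) n"
    using eq lcoset_eq_iff[OF N, of "m a (m b c)" "m (m a b) c"] abc mult_closed by blast
  moreover have "n \<in> Q" using \<open>n \<in> N\<close> coset_compatible_subset[OF N] by blast
  ultimately show ?thesis using associator_eqI[OF abc] by simp
qed

end

locale loop_epimorphism = source: loop_on Q m u + target: loop_on P mP e
  for Q :: "'a set" and m u and P :: "'b set" and mP e +
  fixes pi :: "'a \<Rightarrow> 'b"
  assumes image: "pi ` Q = P"
    and hom: "x \<in> Q \<Longrightarrow> y \<in> Q \<Longrightarrow> pi (m x y) = mP (pi x) (pi y)"
begin

lemma map_closed: "x \<in> Q \<Longrightarrow> pi x \<in> P"
  using image by blast

lemma map_unit: "pi u = e"
proof -
  have "mP (pi u) (pi u) = mP (pi u) e"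
    using hom[of u u] source.unit_closed source.left_unit target.right_unit map_closed by simp
  then show ?thesis
    using target.left_cancel map_closed source.unit_closed target.unit_closed by blast
qed

context
  fixes K assumes K: "coset_compatible P mP e K"
begin

lemma lcoset_preimage:
  assumes x: "x \<in> Q"
  shows "lcoset m x {z \<in> Q. pi z \<in> K} = {v \<in> Q. pi v \<in> lcoset mP (pi x) K}"
proof (intro equalityI subsetI)
  fix v assume "v \<in> lcoset m x {z \<in> Q. pi z \<in> K}"
  then show "v \<in> {v \<in> Q. pi v \<in> lcoset mP (pi x) K}"
    by (auto elim!: lcoset_memE intro!: lcoset_memI simp: x hom source.mult_closed)
next
  fix v assume v: "v \<in> {v \<in> Q. pi v \<in> lcoset mP (pi x) K}"
  then obtain k where k: "k \<in> K" "pi v = mP (pi x) k" by (blast elim: lcoset_memE)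
  obtain t where t: "t \<in> Q" "m x t = v" using source.left_division[OF x] v by blast
  have "mP (pi x) (pi t) = mP (pi x) k" using hom[OF x t(1)] t(2) k(2) by simp
  then have "pi t = k"
    using target.left_cancel map_closed x t(1) k(1) coset_compatible_subset[OF K] by blast
  then show "v \<in> lcoset m x {z \<in> Q. pi z \<in> K}"
    using lcoset_memI[of t] t k by auto
qed

lemma lcoset_preimage_eq_iff:
  assumes "x \<in> Q" "y \<in> Q"
  shows "lcoset m x {z \<in> Q. pi z \<in> K} = lcoset m y {z \<in> Q. pi z \<in> K}
     \<longleftrightarrow> lcoset mP (pi x) K = lcoset mP (pi y) K"
proof -
  have image_preimage: "pi ` {v \<in> Q. pi v \<in> lcoset mP a K} = lcoset mP a K" if "a \<in> P" for a
    using image target.lcoset_subset[OF that coset_compatible_subset[OF K]] by auto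
  show ?thesis
  proof
    assume "lcoset m x {z \<in> Q. pi z \<in> K} = lcoset m y {z \<in> Q. pi z \<in> K}"
    then have "pi ` {v \<in> Q. pi v \<in> lcoset mP (pi x) K} = pi ` {v \<in> Q. pi v \<in> lcoset mP (pi y) K}"
      using lcoset_preimage assms by simp
    then show "lcoset mP (pi x) K = lcoset mP (pi y) K"
      using image_preimage map_closed assms by simp
  qed (use lcoset_preimage assms in simp)
qed

lemma lcoset_preimage_eq_iff_ex:
  assumes x: "x \<in> Q" and y: "y \<in> Q"
  shows "lcoset m x {z \<in> Q. pi z \<in> K} = lcoset m y {z \<in> Q. pi z \<in> K}
     \<longleftrightarrow> (\<exists>z\<in>{z \<in> Q. pi z \<in> K}. y = m x z)"
proof
  have "u \<in> {z \<in> Q. pi z \<in> K}" using source.unit_closed map_unit coset_compatible_unit[OF K] by simp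
  moreover assume "lcoset m x {z \<in> Q. pi z \<in> K} = lcoset m y {z \<in> Q. pi z \<in> K}"
  ultimately have "y \<in> lcoset m x {z \<in> Q. pi z \<in> K}" using source.mem_own_lcoset[OF y] by simp
  then show "\<exists>z\<in>{z \<in> Q. pi z \<in> K}. y = m x z" by (auto elim: lcoset_memE)
next
  assume "\<exists>z\<in>{z \<in> Q. pi z \<in> K}. y = m x z"
  then show "lcoset m x {z \<in> Q. pi z \<in> K} = lcoset m y {z \<in> Q. pi z \<in> K}"
    using lcoset_preimage_eq_iff[OF x y] lcoset_eq_iff[OF K] map_closed x y hom by auto
qed

lemma quot_mult_lcoset_preimage:
  assumes x: "x \<in> Q" and y: "y \<in> Q"
  shows "quot_mult m (lcoset m x {z \<in> Q. pi z \<in> K}) (lcoset m y {z \<in> Q. pi z \<in> K})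
    = lcoset m (m x y) {z \<in> Q. pi z \<in> K}" (is "quot_mult m (lcoset m x ?Z) (lcoset m y ?Z) = _")
proof (intro equalityI subsetI)
  fix v assume "v \<in> quot_mult m (lcoset m x ?Z) (lcoset m y ?Z)"
  then obtain p q where "p \<in> lcoset m x ?Z" "q \<in> lcoset m y ?Z" "v = m p q"
    by (rule quot_mult_memE)
  then have "p \<in> Q" "q \<in> Q" "pi p \<in> lcoset mP (pi x) K" "pi q \<in> lcoset mP (pi y) K"
    and v: "v \<in> Q" "pi v = mP (pi p) (pi q)"
    using lcoset_preimage x y hom source.mult_closed by auto
  then have "pi v \<in> lcoset mP (pi (m x y)) K"
    using quot_mult_memI[of "pi p" _ "pi q" _ mP] quot_mult_lcoset[OF K] hom x y map_closed
    by metis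
  then show "v \<in> lcoset m (m x y) ?Z"
    using lcoset_preimage x y v(1) source.mult_closed by auto
next
  fix v assume "v \<in> lcoset m (m x y) ?Z"
  then have v: "v \<in> Q" "pi v \<in> quot_mult mP (lcoset mP (pi x) K) (lcoset mP (pi y) K)"
    using lcoset_preimage quot_mult_lcoset[OF K] hom x y map_closed source.mult_closed by auto
  obtain a b where ab: "a \<in> lcoset mP (pi x) K" "b \<in> lcoset mP (pi y) K" "pi v = mP a b"
    using v(2) by (rule quot_mult_memE)
  have "a \<in> P" using ab(1) target.lcoset_subset coset_compatible_subset[OF K] map_closed x by blast
  then obtain p where p: "p \<in> Q" "pi p = a" using image by blast
  obtain q where q: "q \<in> Q" "m p q = v" using source.left_division[OF p(1) v(1)] .
  have "b \<in> P" using ab(2) target.lcoset_subset coset_compatible_subset[OF K] map_closed y by blast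
  moreover have "mP a (pi q) = mP a b" using hom[OF p(1) q(1)] p(2) q(2) ab(3) by simp
  ultimately have "pi q = b" using target.left_cancel \<open>a \<in> P\<close> map_closed q(1) by blast
  then show "v \<in> quot_mult m (lcoset m x ?Z) (lcoset m y ?Z)"
    using quot_mult_memI[of p _ q _ m] lcoset_preimage x y p q ab by auto
qed

lemma lcoset_preimage_left_cancel:
  assumes x: "x \<in> Q" and y: "y \<in> Q" and y': "y' \<in> Q"
    and "lcoset m (m x y) {z \<in> Q. pi z \<in> K} = lcoset m (m x y') {z \<in> Q. pi z \<in> K}"
  shows "lcoset m y {z \<in> Q. pi z \<in> K} = lcoset m y' {z \<in> Q. pi z \<in> K}"
proof -
  have "lcoset mP (mP (pi x) (pi y)) K = lcoset mP (mP (pi x) (pi y')) K"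
    using assms lcoset_preimage_eq_iff hom source.mult_closed by simp
  then have "lcoset mP (pi y) K = lcoset mP (pi y') K"
    using lcoset_left_cancel[OF K] map_closed x y y' by blast
  then show ?thesis using lcoset_preimage_eq_iff y y' by simp
qed

lemma coset_compatible_preimage: "coset_compatible Q m u {z \<in> Q. pi z \<in> K}"
  by (rule coset_compatibleI[OF _ _ lcoset_preimage_eq_iff_ex quot_mult_lcoset_preimage
      lcoset_preimage_left_cancel])
     (use source.unit_closed map_unit coset_compatible_unit[OF K] in auto)

end

end


context loop_on
begin

lemma mlt_group_subset_Bij: "mlt_group Q m \<subseteq> Bij Q"
proof -
  have "lmap Q m ` Q \<union> rmap Q m ` Q \<subseteq> carrier (BijGroup Q)"
    using lmap_Bij rmap_Bij by (auto simp: BijGroup_def)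
  then have "h \<in> carrier (BijGroup Q)" if "h \<in> mlt_group Q m" for h
    using group.generate_in_carrier[OF group_BijGroup] that unfolding mlt_group_def by blast
  then show ?thesis by (auto simp: BijGroup_def)
qed

lemma inner_mapping_right_assoc:
  assumes a: "a \<in> Q" and b: "b \<in> Q"
  obtains f where "f \<in> inn_group Q m u" "\<And>x. x \<in> Q \<Longrightarrow> m (f x) (m a b) = m (m x a) b"
proof -
  let ?G = "BijGroup Q"
  define Ra Rb Rab where "Ra = rmap Q m a" and "Rb = rmap Q m b" and "Rab = rmap Q m (m a b)"
  have ab: "m a b \<in> Q" using a b mult_closed by simp
  have B: "Ra \<in> Bij Q" "Rb \<in> Bij Q" "Rab \<in> Bij Q"
    using rmap_Bij a b ab by (auto simp: Ra_def Rb_def Rab_def)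
  define f where "f = inv\<^bsub>?G\<^esub> Rab \<otimes>\<^bsub>?G\<^esub> (Rb \<otimes>\<^bsub>?G\<^esub> Ra)"
  have f_gen: "f \<in> mlt_group Q m"
    unfolding f_def mlt_group_def
    by (rule generate.eng[OF generate.inv generate.eng[OF generate.incl generate.incl]])
       (use a b ab in \<open>auto simp: Ra_def Rb_def Rab_def\<close>)
  have "Rb \<otimes>\<^bsub>?G\<^esub> Ra = compose Q Rb Ra" using B by (simp add: BijGroup_def)
  then have f_eq: "f = compose Q (\<lambda>x\<in>Q. inv_into Q Rab x) (compose Q Rb Ra)"
    unfolding f_def inv_BijGroup[OF B(3)]
    using restrict_inv_into_Bij[OF B(3)] compose_Bij[OF B(2,1)] by (simp add: BijGroup_def)
  have RbRa: "Rb (Ra x) = m (m x a) b" "Rb (Ra x) \<in> Q" if "x \<in> Q" for x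
    using that a b mult_closed by (auto simp: Ra_def Rb_def rmap_def)
  have f_apply: "f x = inv_into Q Rab (m (m x a) b)" if "x \<in> Q" for x
    using that RbRa[OF that] by (simp add: f_eq compose_eq)
  have Rab_img: "Rab ` Q = Q" and Rab_inj: "inj_on Rab Q"
    using B(3) by (auto simp: Bij_def bij_betw_def)
  have f_assoc: "m (f x) (m a b) = m (m x a) b" if "x \<in> Q" for x
    using f_inv_into_f[of "m (m x a) b" Rab Q] Rab_img RbRa[OF that] Bij_inv_into_mem[OF B(3)]
    by (simp add: f_apply that Rab_def rmap_def)
  have "f u = u"
    using inv_into_f_f[OF Rab_inj unit_closed] unit_closed ab
    by (simp add: f_apply Rab_def rmap_def left_unit a)
  with f_gen show thesis by (intro that[OF _ f_assoc]) (simp_all add: inn_group_def)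
qed

end

locale comm_loop = loop_on +
  assumes commute: "a \<in> Q \<Longrightarrow> b \<in> Q \<Longrightarrow> m a b = m b a"

lemma comm_loopI: "is_loop Q m u \<Longrightarrow> loop_commutative Q m \<Longrightarrow> comm_loop Q m u"
  by (simp add: comm_loop_def comm_loop_axioms_def loop_on_def loop_commutative_def)

context comm_loop
begin

text \<open>The left nucleus, which in a commutative loop is the center.\<close>

definition central :: "'a \<Rightarrow> bool" where
  "central z \<longleftrightarrow> z \<in> Q \<and> (\<forall>a\<in>Q. \<forall>b\<in>Q. m (m z a) b = m z (m a b))"

lemma central_closed: "central z \<Longrightarrow> z \<in> Q"
  by (simp add: central_def)

lemma central_left: "central z \<Longrightarrow> a \<in> Q \<Longrightarrow> b \<in> Q \<Longrightarrow> m (m z a) b = m z (m a b)"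
  by (simp add: central_def)

lemma central_mid:
  assumes z: "central z" and a: "a \<in> Q" and b: "b \<in> Q"
  shows "m (m a z) b = m a (m z b)"
proof -
  have zQ: "z \<in> Q" using central_closed[OF z] .
  have "m (m a z) b = m z (m a b)" using central_left[OF z a b] commute[OF a zQ] by simp
  also have "\<dots> = m (m z b) a" using central_left[OF z b a] commute[OF a b] by simp
  also have "\<dots> = m a (m z b)" using commute[OF mult_closed[OF zQ b] a] .
  finally show ?thesis .
qed

lemma central_right:
  assumes z: "central z" and a: "a \<in> Q" and b: "b \<in> Q"
  shows "m (m a b) z = m a (m b z)"
proof -
  have zQ: "z \<in> Q" using central_closed[OF z] .
  have "m (m a b) z = m (m z b) a"
    using central_left[OF z b a] commute[OF mult_closed[OF a b] zQ] commute[OF a b] by simp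
  also have "\<dots> = m a (m b z)" using commute[OF mult_closed[OF zQ b] a] commute[OF zQ b] by simp
  finally show ?thesis .
qed

lemma central_unit: "central u"
  using unit_closed left_unit mult_closed by (simp add: central_def)

lemma central_mult:
  assumes z: "central z" and w: "central w" shows "central (m z w)"
proof -
  have zw: "z \<in> Q" "w \<in> Q" using z w central_closed by auto
  have "m (m (m z w) a) b = m (m z w) (m a b)" if a: "a \<in> Q" and b: "b \<in> Q" for a b
    using central_left[OF z zw(2) a] central_left[OF z mult_closed[OF zw(2) a] b]
      central_left[OF w a b] central_left[OF z zw(2) mult_closed[OF a b]] by simp
  then show ?thesis using mult_closed[OF zw] by (simp add: central_def)
qed

lemma central_inverse:
  assumes z: "central z" obtains z' where "central z'" "m z z' = u"
proof -
  have zQ: "z \<in> Q" using central_closed[OF z] .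
  obtain z' where z': "z' \<in> Q" "m z z' = u" using left_division[OF zQ unit_closed] .
  have "m (m z' a) b = m z' (m a b)" if a: "a \<in> Q" and b: "b \<in> Q" for a b
  proof (rule left_cancel[OF zQ])
    have "m z (m (m z' a) b) = m (m (m z z') a) b"
      using central_left[OF z mult_closed[OF z'(1) a] b] central_left[OF z z'(1) a] by simp
    also have "\<dots> = m (m z z') (m a b)" using z'(2) left_unit a b mult_closed by simp
    also have "\<dots> = m z (m z' (m a b))" using central_left[OF z z'(1) mult_closed[OF a b]] .
    finally show "m z (m (m z' a) b) = m z (m z' (m a b))" .
  qed (use z' a b mult_closed in auto)
  then have "central z'" using z'(1) by (simp add: central_def)
  then show thesis using that z'(2) by blast
qed

lemma central_mult_exchange:
  assumes z: "central z" and w: "central w" and x: "x \<in> Q" and y: "y \<in> Q"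
  shows "m (m x z) (m y w) = m (m x y) (m z w)"
proof -
  have zQ: "z \<in> Q" and wQ: "w \<in> Q" using z w central_closed by auto
  have "m (m x z) (m y w) = m z (m x (m y w))"
    using commute[OF x zQ] central_left[OF z x mult_closed[OF y wQ]] by simp
  also have "\<dots> = m z (m w (m x y))"
    using central_right[OF w x y] commute[OF mult_closed[OF x y] wQ] by simp
  also have "\<dots> = m (m x y) (m z w)"
    using central_left[OF z wQ mult_closed[OF x y]] commute[OF mult_closed[OF zQ wQ] mult_closed[OF x y]]
    by simp
  finally show ?thesis .
qed

lemma central_if_in_center:
  assumes z: "z \<in> loop_center Q m u" shows "central z"
proof -
  have "m (m z a) b = m z (m a b)" if a: "a \<in> Q" and b: "b \<in> Q" for a b
  proof -
    obtain f where "f \<in> inn_group Q m u" "\<And>x. x \<in> Q \<Longrightarrow> m (f x) (m a b) = m (m x a) b"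
      using inner_mapping_right_assoc[OF a b] by blast
    moreover have "f z = z" "z \<in> Q" using z \<open>f \<in> inn_group Q m u\<close> by (auto simp: loop_center_def)
    ultimately show ?thesis by metis
  qed
  then show ?thesis using z by (simp add: central_def loop_center_def)
qed

lemma translation_commutes_central:
  assumes z: "central z" and h: "h \<in> lmap Q m ` Q \<union> rmap Q m ` Q" and x: "x \<in> Q"
  shows "h (m z x) = m z (h x)"
proof -
  have zx: "m z x \<in> Q" using mult_closed[OF central_closed[OF z] x] .
  from h obtain a where a: "a \<in> Q" and "h = lmap Q m a \<or> h = rmap Q m a" by blast
  then consider "h = lmap Q m a" | "h = rmap Q m a" by blast
  then show ?thesis
  proof cases
    case 1
    have "m a (m z x) = m (m a z) x" using central_mid[OF z a x] by simp
    also have "\<dots> = m z (m a x)"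
      using commute[OF a central_closed[OF z]] central_left[OF z a x] by simp
    finally show ?thesis using 1 zx x mult_closed[OF a x] by (simp add: lmap_def)
  next
    case 2
    then show ?thesis using central_left[OF z x a] zx x by (simp add: rmap_def)
  qed
qed

lemma mlt_group_commutes_central:
  assumes z: "central z" and g: "g \<in> mlt_group Q m" and x: "x \<in> Q"
  shows "g (m z x) = m z (g x)"
  using g x unfolding mlt_group_def
proof (induction arbitrary: x)
  case one
  then show ?case using mult_closed[OF central_closed[OF z]] by (simp add: BijGroup_def)
next
  case (incl h)
  then show ?case by (rule translation_commutes_central[OF z])
next
  case (inv h)
  have hB: "h \<in> Bij Q" using inv lmap_Bij rmap_Bij by auto
  have y: "inv_into Q h x \<in> Q" using Bij_inv_into_mem[OF hB inv(2)] .
  have "h (inv_into Q h x) = x"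
    using f_inv_into_f[of x h Q] hB inv(2) by (simp add: Bij_def bij_betw_def)
  then have "h (m z (inv_into Q h x)) = m z x" using translation_commutes_central[OF z inv(1) y] by simp
  then have "inv_into Q h (m z x) = m z (inv_into Q h x)"
    using hB mult_closed[OF central_closed[OF z] y] unfolding Bij_def bij_betw_def
    by (blast intro: inv_into_f_eq)
  then show ?case using inv(2) mult_closed[OF central_closed[OF z]] by (simp add: inv_BijGroup[OF hB])
next
  case (eng h1 h2)
  have "h1 \<in> Bij Q" "h2 \<in> Bij Q"
    using eng(1,2) mlt_group_subset_Bij by (auto simp: mlt_group_def)
  moreover have "h2 x \<in> Q" "h2 (m z x) = m z (h2 x)"
    using eng(4,5) Bij_imp_funcset[OF \<open>h2 \<in> Bij Q\<close>] by auto
  ultimately show ?case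
    using eng(3,5) mult_closed[OF central_closed[OF z] eng(5)]
    by (simp add: BijGroup_def compose_eq)
qed

lemma loop_center_eq: "loop_center Q m u = {z. central z}"
proof (intro equalityI subsetI)
  fix z assume "z \<in> {z. central z}"
  then have z: "central z" by simp
  have "f z = z" if f: "f \<in> inn_group Q m u" for f
    using mlt_group_commutes_central[OF z _ unit_closed, of f] f right_unit[OF central_closed[OF z]]
    by (simp add: inn_group_def)
  then show "z \<in> loop_center Q m u" using central_closed[OF z] by (simp add: loop_center_def)
qed (simp add: central_if_in_center)

end

context comm_loop
begin

context
  fixes K
  assumes K_central: "\<And>k. k \<in> K \<Longrightarrow> central k"
    and K_mult: "\<And>k l. k \<in> K \<Longrightarrow> l \<in> K \<Longrightarrow> m k l \<in> K"
    and K_inverse: "\<And>k. k \<in> K \<Longrightarrow> \<exists>k'\<in>K. m k k' = u"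
    and K_unit: "u \<in> K"
begin

lemma lcoset_mult_central:
  assumes x: "x \<in> Q" and k: "k \<in> K"
  shows "lcoset m (m x k) K = lcoset m x K"
proof (intro equalityI subsetI)
  fix v assume "v \<in> lcoset m (m x k) K"
  then obtain l where l: "l \<in> K" "v = m (m x k) l" by (rule lcoset_memE)
  then have "v = m x (m k l)"
    using central_right[OF K_central[OF l(1)] x central_closed[OF K_central[OF k]]] by simp
  then show "v \<in> lcoset m x K" using lcoset_memI[OF K_mult[OF k l(1)]] by simp
next
  fix v assume "v \<in> lcoset m x K"
  then obtain l where l: "l \<in> K" "v = m x l" by (rule lcoset_memE)
  obtain k' where k': "k' \<in> K" "m k k' = u" using K_inverse[OF k] by blast
  have kQ: "k' \<in> Q" "l \<in> Q" using k'(1) l(1) K_central central_closed by auto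
  have "m (m x k) (m k' l) = m x (m (m k k') l)"
    using central_mid[OF K_central[OF k] x mult_closed[OF kQ]]
      central_left[OF K_central[OF k] kQ] by simp
  then have "v = m (m x k) (m k' l)" using l(2) k'(2) left_unit[OF kQ(2)] by simp
  then show "v \<in> lcoset m (m x k) K" using lcoset_memI[OF K_mult[OF k'(1) l(1)]] by simp
qed

lemma lcoset_eq_iff_central:
  assumes x: "x \<in> Q" and y: "y \<in> Q"
  shows "lcoset m x K = lcoset m y K \<longleftrightarrow> (\<exists>k\<in>K. y = m x k)"
proof
  assume "lcoset m x K = lcoset m y K"
  then show "\<exists>k\<in>K. y = m x k"
    using mem_own_lcoset[OF y K_unit] by (auto elim: lcoset_memE)
qed (use lcoset_mult_central[OF x] in auto)

lemma coset_compatible_central_subgroup: "coset_compatible Q m u K"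
proof (rule coset_compatibleI[OF _ K_unit lcoset_eq_iff_central])
  show "K \<subseteq> Q" using K_central central_closed by blast
  fix x y assume x: "x \<in> Q" and y: "y \<in> Q"
  show "quot_mult m (lcoset m x K) (lcoset m y K) = lcoset m (m x y) K"
  proof (intro equalityI subsetI)
    fix v assume "v \<in> quot_mult m (lcoset m x K) (lcoset m y K)"
    then obtain k l where "k \<in> K" "l \<in> K" "v = m (m x k) (m y l)"
      by (auto elim!: quot_mult_memE lcoset_memE)
    then show "v \<in> lcoset m (m x y) K"
      using central_mult_exchange[OF K_central K_central x y] lcoset_memI K_mult by metis
  next
    fix v assume "v \<in> lcoset m (m x y) K"
    then obtain k where k: "k \<in> K" "v = m (m x y) k" by (rule lcoset_memE)
    then have "v = m x (m y k)" using central_right[OF K_central[OF k(1)] x y] by simp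
    then show "v \<in> quot_mult m (lcoset m x K) (lcoset m y K)"
      using quot_mult_memI[OF mem_own_lcoset[OF x K_unit] lcoset_memI[OF k(1)]] by simp
  qed
next
  fix x y y' assume x: "x \<in> Q" and y: "y \<in> Q" and y': "y' \<in> Q"
    and "lcoset m (m x y) K = lcoset m (m x y') K"
  then obtain k where k: "k \<in> K" "m x y' = m (m x y) k"
    using lcoset_eq_iff_central mult_closed by blast
  then have "m x y' = m x (m y k)" using central_right[OF K_central[OF k(1)] x y] by simp
  then have "y' = m y k"
    using left_cancel[OF x y' mult_closed[OF y]] K_central[OF k(1)] central_closed by blast
  then show "lcoset m y K = lcoset m y' K" using lcoset_mult_central[OF y k(1)] by simp
qed

end

lemma coset_compatible_unit_set: "coset_compatible Q m u {u}"
  by (rule coset_compatible_central_subgroup) (auto simp: central_unit left_unit unit_closed)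

lemma coset_compatible_center: "coset_compatible Q m u (loop_center Q m u)"
  unfolding loop_center_eq
  by (rule coset_compatible_central_subgroup)
     (auto simp: central_unit central_mult elim: central_inverse)

context
  fixes pi :: "'a \<Rightarrow> 'b" and P mP
  assumes image: "pi ` Q = P"
    and hom: "\<And>x y. x \<in> Q \<Longrightarrow> y \<in> Q \<Longrightarrow> mP (pi x) (pi y) = pi (m x y)"
    and cancel: "\<And>x y y'. x \<in> Q \<Longrightarrow> y \<in> Q \<Longrightarrow> y' \<in> Q \<Longrightarrow>
                   pi (m x y) = pi (m x y') \<Longrightarrow> pi y = pi y'"
begin

lemma image_mult_closed: "A \<in> P \<Longrightarrow> B \<in> P \<Longrightarrow> mP A B \<in> P"
  using image hom mult_closed by auto

lemma image_commute: "A \<in> P \<Longrightarrow> B \<in> P \<Longrightarrow> mP A B = mP B A"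
  using image hom commute by auto

lemma image_left_unit: "A \<in> P \<Longrightarrow> mP (pi u) A = A"
  using image hom left_unit unit_closed by auto

lemma image_bij_left_translation:
  assumes A: "A \<in> P" shows "bij_betw (\<lambda>B. mP A B) P P"
proof -
  obtain x where x: "x \<in> Q" "A = pi x" using A image by blast
  have "inj_on (\<lambda>B. mP A B) P"
  proof (rule inj_onI)
    fix B B' assume "B \<in> P" "B' \<in> P" and eq: "mP A B = mP A B'"
    then obtain y y' where y: "y \<in> Q" "y' \<in> Q" and B: "B = pi y" "B' = pi y'"
      using image by blast
    then have "pi (m x y) = pi (m x y')" using eq x hom by simp
    then show "B = B'" using cancel[OF x(1) y] B by simp
  qed
  moreover have "P \<subseteq> (\<lambda>B. mP A B) ` P"
  proof
    fix C assume "C \<in> P"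
    then obtain c where c: "c \<in> Q" "C = pi c" using image by blast
    obtain t where t: "t \<in> Q" "m x t = c" using left_division[OF x(1) c(1)] .
    then have "C = mP A (pi t)" using x c hom[OF x(1) t(1)] by simp
    then show "C \<in> (\<lambda>B. mP A B) ` P" using image t(1) by blast
  qed
  ultimately show ?thesis using image_mult_closed A by (auto simp: bij_betw_def)
qed

lemma comm_loop_image: "comm_loop P mP (pi u)"
proof -
  have "bij_betw (\<lambda>B. mP B A) P P" if "A \<in> P" for A
    using image_bij_left_translation[OF that] image_commute that
      bij_betw_cong[of P "\<lambda>B. mP B A" "\<lambda>B. mP A B"] by simp
  moreover have "pi u \<in> P" using image unit_closed by blast
  ultimately show ?thesis
    using image_mult_closed image_commute image_left_unit image_bij_left_translation
    by (simp add: comm_loop_def comm_loop_axioms_def loop_on_def is_loop_def)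
qed

end

context
  fixes N assumes N: "coset_compatible Q m u N"
begin

lemma quotient_comm_loop: "comm_loop (quot_carrier Q m N) (quot_mult m) N"
proof -
  have "lcoset m u N = (\<lambda>n. n) ` N"
    unfolding lcoset_def
    by (rule image_cong[OF refl]) (use left_unit coset_compatible_subset[OF N] in blast)
  then have "lcoset m u N = N" by simp
  moreover have "comm_loop (quot_carrier Q m N) (quot_mult m) ((\<lambda>x. lcoset m x N) u)"
    by (rule comm_loop_image[of "\<lambda>x. lcoset m x N", OF _ quot_mult_lcoset[OF N]
          lcoset_left_cancel[OF N]])
       (simp add: quot_carrier_def)
  ultimately show ?thesis by simp
qed

lemma quotient_epimorphism:
  "loop_epimorphism Q m u (quot_carrier Q m N) (quot_mult m) N (\<lambda>x. lcoset m x N)"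
proof -
  interpret P: comm_loop "quot_carrier Q m N" "quot_mult m" N by (rule quotient_comm_loop)
  show ?thesis
    by (intro loop_epimorphism.intro loop_on.intro loop_epimorphism_axioms.intro is_loop P.is_loop)
       (simp_all add: quot_carrier_def quot_mult_lcoset[OF N])
qed

lemma associators_central_coset:
  assumes x: "x \<in> Q" and b: "b \<in> Q" and c: "c \<in> Q"
    and cen: "lcoset m x N \<in> loop_center (quot_carrier Q m N) (quot_mult m) N"
  shows "associator Q m x b c \<in> N" "associator Q m b x c \<in> N" "associator Q m b c x \<in> N"
proof -
  interpret P: comm_loop "quot_carrier Q m N" "quot_mult m" N by (rule quotient_comm_loop)
  let ?pi = "\<lambda>y. lcoset m y N"
  have xc: "P.central (?pi x)" using cen by (simp add: P.loop_center_eq)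
  have pi: "?pi y \<in> quot_carrier Q m N" if "y \<in> Q" for y using that by (simp add: quot_carrier_def)
  note hom = quot_mult_lcoset[OF N, symmetric]
  show "associator Q m x b c \<in> N"
    using associator_in_kernel[OF N x b c] P.central_left[OF xc pi[OF b] pi[OF c]]
    by (simp add: hom x b c mult_closed)
  show "associator Q m b x c \<in> N"
    using associator_in_kernel[OF N b x c] P.central_mid[OF xc pi[OF b] pi[OF c]]
    by (simp add: hom x b c mult_closed)
  show "associator Q m b c x \<in> N"
    using associator_in_kernel[OF N b c x] P.central_right[OF xc pi[OF b] pi[OF c]]
    by (simp add: hom x b c mult_closed)
qed

end

lemma coset_compatible_upper_center: "coset_compatible Q m u (upper_center Q m u i)"
proof (induction i)
  case 0
  then show ?case using coset_compatible_unit_set by simp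
next
  case (Suc i)
  let ?N = "upper_center Q m u i"
  interpret P: comm_loop "quot_carrier Q m ?N" "quot_mult m" ?N
    by (rule quotient_comm_loop[OF Suc])
  show ?case
    using loop_epimorphism.coset_compatible_preimage[OF quotient_epimorphism[OF Suc]
        P.coset_compatible_center]
    by (simp add: Let_def)
qed

lemma associators_upper_center_Suc:
  assumes x: "x \<in> upper_center Q m u (Suc i)" and b: "b \<in> Q" and c: "c \<in> Q"
  shows "associator Q m x b c \<in> upper_center Q m u i"
    and "associator Q m b x c \<in> upper_center Q m u i"
    and "associator Q m b c x \<in> upper_center Q m u i"
  using associators_central_coset[OF coset_compatible_upper_center _ b c] x by (simp_all add: Let_def)

lemma central_if_upper_center_one:
  assumes x: "x \<in> upper_center Q m u 1" shows "central x"
proof -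
  have xQ: "x \<in> Q" using x by (simp add: Let_def)
  have "m (m x a) b = m x (m a b)" if a: "a \<in> Q" and b: "b \<in> Q" for a b
    using associators_upper_center_Suc(1)[of x 0 a b] x a b associator_spec[OF xQ a b]
      right_unit mult_closed xQ by simp
  then show ?thesis using xQ by (simp add: central_def)
qed

lemma associator_inverse_mirror:
  assumes z: "z \<in> Q" and d: "d \<in> Q" and e: "e \<in> Q"
    and central_mirror: "central (associator Q m e d z)"
  shows "loop_inverse Q m u (associator Q m z d e) = associator Q m e d z"
proof -
  define p q where "p = associator Q m z d e" and "q = associator Q m e d z"
  define X Y where "X = m (m z d) e" and "Y = m z (m d e)"
  have pQ: "p \<in> Q" and qQ: "q \<in> Q" and XQ: "X \<in> Q"
    using associator_spec[OF z d e] associator_spec[OF e d z] mult_closed[OF mult_closed[OF z d] e]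
    by (simp_all add: p_def q_def X_def)
  have "X = m Y p" using associator_spec[OF z d e] by (simp add: X_def Y_def p_def)
  moreover have "Y = m X q"
  proof -
    have "m (m e d) z = Y"
      using commute[OF mult_closed[OF e d] z] commute[OF e d] by (simp add: Y_def)
    moreover have "m e (m d z) = X"
      using commute[OF e mult_closed[OF d z]] commute[OF d z] by (simp add: X_def)
    ultimately show ?thesis using associator_spec[OF e d z] by (simp add: q_def)
  qed
  ultimately have "m X u = m X (m q p)"
    using central_mid[OF central_mirror[folded q_def] XQ pQ] right_unit[OF XQ] by simp
  then have "m q p = u" using left_cancel[OF XQ unit_closed mult_closed[OF qQ pQ]] by simp
  then show ?thesis
    using loop_inverse_eqI[OF pQ qQ] commute[OF pQ qQ] by (simp add: p_def q_def)
qed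

lemma associator_middle_split:
  assumes a: "a \<in> Q" and z: "z \<in> Q" and e: "e \<in> Q"
    and central_aez: "central (associator Q m a e z)"
  shows "associator Q m a z e = m (associator Q m a e z) (associator Q m z a e)"
proof -
  define r1 r2 r3 where "r1 = associator Q m a z e" and "r2 = associator Q m a e z"
    and "r3 = associator Q m z a e"
  define W where "W = m a (m e z)"
  have rQ: "r1 \<in> Q" "r2 \<in> Q" "r3 \<in> Q" and WQ: "W \<in> Q"
    using associator_spec[OF a z e] associator_spec[OF a e z] associator_spec[OF z a e]
      mult_closed[OF a mult_closed[OF e z]]
    by (simp_all add: r1_def r2_def r3_def W_def)
  have "m W r1 = m (m a z) e"
    using associator_spec[OF a z e] commute[OF z e] by (simp add: W_def r1_def)
  also have "\<dots> = m (m z (m a e)) r3"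
    using associator_spec[OF z a e] commute[OF a z] by (simp add: r3_def)
  also have "m z (m a e) = m W r2"
    using associator_spec[OF a e z] commute[OF z mult_closed[OF a e]] by (simp add: W_def r2_def)
  also have "m (m W r2) r3 = m W (m r2 r3)"
    using central_mid[OF central_aez[folded r2_def] WQ rQ(3)] .
  finally show ?thesis
    using left_cancel[OF WQ rQ(1) mult_closed[OF rQ(2,3)]] by (simp add: r1_def r2_def r3_def)
qed

end

theorem lemma2p5:
  fixes Q :: "'a set" and m :: "'a \<Rightarrow> 'a \<Rightarrow> 'a" and u :: 'a
  assumes "is_loop Q m u"
    and "loop_commutative Q m"
    and "loop_automorphic Q m u"
    and "nilpotency_class Q m u 3"
  shows "\<forall>a\<in>Q. \<forall>b\<in>Q. \<forall>c\<in>Q. \<forall>d\<in>Q. \<forall>e\<in>Q.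
           loop_inverse Q m u (associator Q m (associator Q m a b c) d e)
             = associator Q m e d (associator Q m a b c)
         \<and> associator Q m a (associator Q m b c d) e
             = m (associator Q m a e (associator Q m b c d))
                 (associator Q m (associator Q m b c d) a e)"
proof (intro ballI conjI)
  interpret comm_loop Q m u using assms(1,2) by (rule comm_loopI)
  have Z3: "upper_center Q m u (Suc 2) = Q"
    using assms(4) by (simp add: nilpotency_class_def)
  have Z2: "associator Q m a b c \<in> upper_center Q m u 2" if "a \<in> Q" "b \<in> Q" "c \<in> Q" for a b c
    using associators_upper_center_Suc(1)[of a 2 b c] that Z3 by blast
  have Z2_Q: "upper_center Q m u 2 \<subseteq> Q"
    using coset_compatible_subset[OF coset_compatible_upper_center] .
  have central_assoc: "central (associator Q m x y z)"
    if "x \<in> Q" "y \<in> Q" "z \<in> upper_center Q m u 2" for x y z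
    using central_if_upper_center_one associators_upper_center_Suc(3)[of z 1 x y] that
    unfolding Suc_1 by blast
  fix a b c d e assume abcde: "a \<in> Q" "b \<in> Q" "c \<in> Q" "d \<in> Q" "e \<in> Q"
  have w: "associator Q m a b c \<in> upper_center Q m u 2" and
    w': "associator Q m b c d \<in> upper_center Q m u 2"
    using Z2 abcde by auto
  show "loop_inverse Q m u (associator Q m (associator Q m a b c) d e)
      = associator Q m e d (associator Q m a b c)"
    using associator_inverse_mirror[OF subsetD[OF Z2_Q w] abcde(4,5)
        central_assoc[OF abcde(5,4) w]] .
  show "associator Q m a (associator Q m b c d) e
      = m (associator Q m a e (associator Q m b c d)) (associator Q m (associator Q m b c d) a e)"
    using associator_middle_split[OF abcde(1) subsetD[OF Z2_Q w'] abcde(5)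
        central_assoc[OF abcde(1,5) w']] .
qed

end
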